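(* Let $(A,B)$ be a $B$-irreducible odd-symmetric non-simple associative superalgebra such that $A_{\bar{0}}$ is a semi-simple associative algebra. Then $A\cong S\oplus P(S^* )$ is the semi-direct product of a simple associative algebra $S$ by $P(S^* )$ by means of $(L^*,R^* )$.
   Context: $\mathbb{K}$ algebraically closed of characteristic zero; finite dimensional associative superalgebras $A=A_{\bar{0}}\oplus A_{\bar{1}}$. An odd-symmetric structure is an odd (i.e. $B(A_{\bar{0}},A_{\bar{0}})=B(A_{\bar{1}},A_{\bar{1}})=\{0\}$), supersymmetric, associative ($B(xy,z)=B(x,yz)$), non-degenerate bilinear form $B$. $(A,B)$ is $B$-irreducible if $A$ contains no non-degenerate graded two-sided ideal other than $\{0\}$ and $A$. For an associative algebra $S$, $P(S^* )$ is the graded space with $P(S^* )_{\bar{0}}=\{0\}$, $P(S^* )_{\bar{1}}=S^*$; the semi-direct product $S\oplus P(S^* )$ has product $(x+f)(y+h)=xy+h\circ R_x+f\circ L_y$ ($L,R$ left/right multiplications in $S$, i.e. $L^*(x)(h)=h\circ R_x$, $R^*(y)(f)=f\circ L_y$) and odd-symmetric form $\widetilde{B}(f,x)=\widetilde{B}(x,f)=f(x)$, $\widetilde{B}(S,S)=\widetilde{B}(P(S^* ),P(S^* ))=\{0\}$. *)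

theory Defs
  imports "HOL-Computational_Algebra.Polynomial"
begin

text \<open>Ground field: algebraically closed, characteristic zero (the type class field_char_0
plus the explicit closure condition below).\<close>
definition alg_closed :: "'k::field itself \<Rightarrow> bool" where
  "alg_closed _ \<longleftrightarrow> (\<forall>p :: 'k poly. degree p \<ge> 1 \<longrightarrow> (\<exists>x. poly p x = 0))"

definition fin_dim_vs :: "('k::field \<Rightarrow> 'a::ab_group_add \<Rightarrow> 'a) \<Rightarrow> bool" where
  "fin_dim_vs sc \<longleftrightarrow> vector_space sc \<and> (\<exists>G. finite G \<and> module.span sc G = UNIV)"

definition bilinear_on :: "('k::field \<Rightarrow> 'a::ab_group_add \<Rightarrow> 'a) \<Rightarrow> 'a set \<Rightarrow> ('a \<Rightarrow> 'a \<Rightarrow> 'a) \<Rightarrow> bool" where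
  "bilinear_on sc C m \<longleftrightarrow>
     (\<forall>x\<in>C. \<forall>y\<in>C. \<forall>z\<in>C. m (x + y) z = m x z + m y z \<and> m x (y + z) = m x y + m x z) \<and>
     (\<forall>c. \<forall>x\<in>C. \<forall>y\<in>C. m (sc c x) y = sc c (m x y) \<and> m x (sc c y) = sc c (m x y))"

definition assoc_superalg ::
  "('k::field \<Rightarrow> 'a::ab_group_add \<Rightarrow> 'a) \<Rightarrow> ('a \<Rightarrow> 'a \<Rightarrow> 'a) \<Rightarrow> 'a set \<Rightarrow> 'a set \<Rightarrow> bool" where
  "assoc_superalg sc m A0 A1 \<longleftrightarrow>
     fin_dim_vs sc \<and> bilinear_on sc UNIV m \<and>
     (\<forall>x y z. m (m x y) z = m x (m y z)) \<and>
     module.subspace sc A0 \<and> module.subspace sc A1 \<and>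
     A0 \<inter> A1 = {0} \<and> (\<forall>x. \<exists>a\<in>A0. \<exists>b\<in>A1. x = a + b) \<and>
     (\<forall>x\<in>A0. \<forall>y\<in>A0. m x y \<in> A0) \<and> (\<forall>x\<in>A0. \<forall>y\<in>A1. m x y \<in> A1) \<and>
     (\<forall>x\<in>A1. \<forall>y\<in>A0. m x y \<in> A1) \<and> (\<forall>x\<in>A1. \<forall>y\<in>A1. m x y \<in> A0)"

definition odd_symmetric ::
  "('k::field \<Rightarrow> 'a::ab_group_add \<Rightarrow> 'a) \<Rightarrow> ('a \<Rightarrow> 'a \<Rightarrow> 'a) \<Rightarrow> 'a set \<Rightarrow> 'a set \<Rightarrow> ('a \<Rightarrow> 'a \<Rightarrow> 'k) \<Rightarrow> bool" where
  "odd_symmetric sc m A0 A1 B \<longleftrightarrow>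
     (\<forall>x y z. B (x + y) z = B x z + B y z \<and> B x (y + z) = B x y + B x z) \<and>
     (\<forall>c x y. B (sc c x) y = c * B x y \<and> B x (sc c y) = c * B x y) \<and>
     (\<forall>x\<in>A0. \<forall>y\<in>A0. B x y = 0) \<and> (\<forall>x\<in>A1. \<forall>y\<in>A1. B x y = 0) \<and>
     (\<forall>x\<in>A0. \<forall>y\<in>A0. B x y = B y x) \<and> (\<forall>x\<in>A0. \<forall>y\<in>A1. B x y = B y x) \<and>
     (\<forall>x\<in>A1. \<forall>y\<in>A0. B x y = B y x) \<and> (\<forall>x\<in>A1. \<forall>y\<in>A1. B x y = - B y x) \<and>
     (\<forall>x y z. B (m x y) z = B x (m y z)) \<and>
     (\<forall>x. (\<forall>y. B x y = 0) \<longrightarrow> x = 0)"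

definition graded_ideal ::
  "('k::field \<Rightarrow> 'a::ab_group_add \<Rightarrow> 'a) \<Rightarrow> ('a \<Rightarrow> 'a \<Rightarrow> 'a) \<Rightarrow> 'a set \<Rightarrow> 'a set \<Rightarrow> 'a set \<Rightarrow> bool" where
  "graded_ideal sc m A0 A1 I \<longleftrightarrow>
     module.subspace sc I \<and>
     (\<forall>a\<in>A0. \<forall>b\<in>A1. a + b \<in> I \<longrightarrow> a \<in> I \<and> b \<in> I) \<and>
     (\<forall>x\<in>I. \<forall>y. m x y \<in> I \<and> m y x \<in> I)"

definition nondeg_on :: "('a::zero \<Rightarrow> 'a \<Rightarrow> 'k::field) \<Rightarrow> 'a set \<Rightarrow> bool" where
  "nondeg_on B I \<longleftrightarrow> (\<forall>x\<in>I. (\<forall>y\<in>I. B x y = 0) \<longrightarrow> x = 0)"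

definition B_irreducible ::
  "('k::field \<Rightarrow> 'a::ab_group_add \<Rightarrow> 'a) \<Rightarrow> ('a \<Rightarrow> 'a \<Rightarrow> 'a) \<Rightarrow> 'a set \<Rightarrow> 'a set \<Rightarrow> ('a \<Rightarrow> 'a \<Rightarrow> 'k) \<Rightarrow> bool" where
  "B_irreducible sc m A0 A1 B \<longleftrightarrow>
     (UNIV :: 'a set) \<noteq> {0} \<and>
     (\<forall>I. graded_ideal sc m A0 A1 I \<and> nondeg_on B I \<longrightarrow> I = {0} \<or> I = UNIV)"

definition simple_superalg ::
  "('k::field \<Rightarrow> 'a::ab_group_add \<Rightarrow> 'a) \<Rightarrow> ('a \<Rightarrow> 'a \<Rightarrow> 'a) \<Rightarrow> 'a set \<Rightarrow> 'a set \<Rightarrow> bool" where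
  "simple_superalg sc m A0 A1 \<longleftrightarrow>
     (\<exists>x y. m x y \<noteq> 0) \<and>
     (\<forall>I. graded_ideal sc m A0 A1 I \<longrightarrow> I = {0} \<or> I = UNIV)"

definition alg_ideal ::
  "('k::field \<Rightarrow> 'a::ab_group_add \<Rightarrow> 'a) \<Rightarrow> 'a set \<Rightarrow> ('a \<Rightarrow> 'a \<Rightarrow> 'a) \<Rightarrow> 'a set \<Rightarrow> bool" where
  "alg_ideal sc C m J \<longleftrightarrow>
     module.subspace sc J \<and> J \<subseteq> C \<and> (\<forall>x\<in>J. \<forall>y\<in>C. m x y \<in> J \<and> m y x \<in> J)"

text \<open>prods m J n = set of all products x_0 (x_1 (... x_n)) with x_i in J (n+1 factors).\<close>
fun prods :: "('a \<Rightarrow> 'a \<Rightarrow> 'a) \<Rightarrow> 'a set \<Rightarrow> nat \<Rightarrow> 'a set" where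
  "prods m J 0 = J"
| "prods m J (Suc n) = {m x y | x y. x \<in> J \<and> y \<in> prods m J n}"

definition nilpotent_set :: "('a::zero \<Rightarrow> 'a \<Rightarrow> 'a) \<Rightarrow> 'a set \<Rightarrow> bool" where
  "nilpotent_set m J \<longleftrightarrow> (\<exists>n. prods m J n \<subseteq> {0})"

definition assoc_alg_on ::
  "('k::field \<Rightarrow> 'a::ab_group_add \<Rightarrow> 'a) \<Rightarrow> 'a set \<Rightarrow> ('a \<Rightarrow> 'a \<Rightarrow> 'a) \<Rightarrow> bool" where
  "assoc_alg_on sc C m \<longleftrightarrow>
     module.subspace sc C \<and> (\<forall>x\<in>C. \<forall>y\<in>C. m x y \<in> C) \<and> bilinear_on sc C m \<and>
     (\<forall>x\<in>C. \<forall>y\<in>C. \<forall>z\<in>C. m (m x y) z = m x (m y z))"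

text \<open>Semi-simple (finite-dimensional) associative algebra: zero radical, i.e.
no nonzero nilpotent two-sided ideal.\<close>
definition semisimple_alg ::
  "('k::field \<Rightarrow> 'a::ab_group_add \<Rightarrow> 'a) \<Rightarrow> 'a set \<Rightarrow> ('a \<Rightarrow> 'a \<Rightarrow> 'a) \<Rightarrow> bool" where
  "semisimple_alg sc C m \<longleftrightarrow> assoc_alg_on sc C m \<and>
     (\<forall>J. alg_ideal sc C m J \<and> nilpotent_set m J \<longrightarrow> J = {0})"

definition simple_alg ::
  "('k::field \<Rightarrow> 'a::ab_group_add \<Rightarrow> 'a) \<Rightarrow> 'a set \<Rightarrow> ('a \<Rightarrow> 'a \<Rightarrow> 'a) \<Rightarrow> bool" where
  "simple_alg sc C m \<longleftrightarrow> assoc_alg_on sc C m \<and>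
     (\<exists>x\<in>C. \<exists>y\<in>C. m x y \<noteq> 0) \<and>
     (\<forall>J. alg_ideal sc C m J \<longrightarrow> J = {0} \<or> J = C)"

text \<open>Dual space S^* of a subspace S: linear functionals on S (extended by 0 outside S).\<close>
definition dual_sp :: "('k::field \<Rightarrow> 'a::ab_group_add \<Rightarrow> 'a) \<Rightarrow> 'a set \<Rightarrow> ('a \<Rightarrow> 'k) set" where
  "dual_sp sc S = {f. (\<forall>x\<in>S. \<forall>y\<in>S. f (x + y) = f x + f y) \<and>
                      (\<forall>c. \<forall>x\<in>S. f (sc c x) = c * f x) \<and> (\<forall>x. x \<notin> S \<longrightarrow> f x = 0)}"

definition sdp_carrier :: "('k::field \<Rightarrow> 'a::ab_group_add \<Rightarrow> 'a) \<Rightarrow> 'a set \<Rightarrow> ('a \<times> ('a \<Rightarrow> 'k)) set" where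
  "sdp_carrier sc S = S \<times> dual_sp sc S"

definition sdp_add :: "'a::ab_group_add \<times> ('a \<Rightarrow> 'k::field) \<Rightarrow> 'a \<times> ('a \<Rightarrow> 'k) \<Rightarrow> 'a \<times> ('a \<Rightarrow> 'k)" where
  "sdp_add p q = (fst p + fst q, \<lambda>z. snd p z + snd q z)"

definition sdp_scale :: "('k::field \<Rightarrow> 'a::ab_group_add \<Rightarrow> 'a) \<Rightarrow> 'k \<Rightarrow> 'a \<times> ('a \<Rightarrow> 'k) \<Rightarrow> 'a \<times> ('a \<Rightarrow> 'k)" where
  "sdp_scale sc c p = (sc c (fst p), \<lambda>z. c * snd p z)"

text \<open>(x+f)(y+h) = xy + h o R_x + f o L_y.\<close>
definition sdp_mult :: "'a set \<Rightarrow> ('a \<Rightarrow> 'a \<Rightarrow> 'a) \<Rightarrow>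
    'a \<times> ('a \<Rightarrow> 'k::field) \<Rightarrow> 'a \<times> ('a \<Rightarrow> 'k) \<Rightarrow> 'a \<times> ('a \<Rightarrow> 'k)" where
  "sdp_mult S mS p q =
     (mS (fst p) (fst q),
      \<lambda>z. if z \<in> S then snd q (mS z (fst p)) + snd p (mS (fst q) z) else 0)"

definition sdp_superalg_iso ::
  "('k::field \<Rightarrow> 'a::ab_group_add \<Rightarrow> 'a) \<Rightarrow> ('a \<Rightarrow> 'a \<Rightarrow> 'a) \<Rightarrow> 'a set \<Rightarrow> 'a set \<Rightarrow>
   'a set \<Rightarrow> ('a \<Rightarrow> 'a \<Rightarrow> 'a) \<Rightarrow> ('a \<Rightarrow> 'a \<times> ('a \<Rightarrow> 'k)) \<Rightarrow> bool" where
  "sdp_superalg_iso sc m A0 A1 S mS \<phi> \<longleftrightarrow>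
     bij_betw \<phi> UNIV (sdp_carrier sc S) \<and>
     (\<forall>x y. \<phi> (x + y) = sdp_add (\<phi> x) (\<phi> y)) \<and>
     (\<forall>c x. \<phi> (sc c x) = sdp_scale sc c (\<phi> x)) \<and>
     (\<forall>x y. \<phi> (m x y) = sdp_mult S mS (\<phi> x) (\<phi> y)) \<and>
     \<phi> ` A0 = S \<times> {\<lambda>_. 0} \<and>
     \<phi> ` A1 = {0} \<times> dual_sp sc S"

end

theory Submission
  imports Defs
begin

text \<open>
  Semisimplicity of \<open>A\<^sub>0\<close> is used only through semiprimeness (no nonzero ideal of square
  zero). By Brauer's lemma every minimal left ideal then contains an idempotent, and
  consequently every ideal \<open>J\<close> of \<open>A\<^sub>0\<close> has a unit \<open>u\<close>. Since \<open>B\<close> pairs \<open>A\<^sub>0\<close> and \<open>A\<^sub>1\<close>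
  non-degenerately, \<open>u\<close> is central in \<open>A\<close>, so \<open>{x. u x = x}\<close> is a non-degenerate graded
  ideal of \<open>A\<close>; \<open>B\<close>-irreducibility therefore makes \<open>A\<^sub>0\<close> simple, and its unit is the unit
  of \<open>A\<close>.

  As \<open>A\<close> is not simple, a proper graded ideal \<open>G\<close> yields the nonzero isotropic graded ideal
  \<open>G \<inter> G\<^sup>\<perp>\<close>. It meets \<open>A\<^sub>0\<close> trivially, so it contains an odd \<open>h \<noteq> 0\<close>, and \<open>h\<close> annihilates
  \<open>A\<^sub>1\<close>. Hence the ideal of \<open>A\<^sub>0\<close> spanned by \<open>A\<^sub>1A\<^sub>1\<close> is orthogonal to \<open>h\<close>, so it is
  proper and thus zero. Finally \<open>B\<close> identifies \<open>A\<^sub>1\<close> with \<open>A\<^sub>0\<^sup>*\<close> (via dual bases), and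
  \<open>x\<^sub>0 + x\<^sub>1 \<mapsto> (x\<^sub>0, B x\<^sub>1 -)\<close> is the required isomorphism onto \<open>A\<^sub>0 \<oplus> P(A\<^sub>0\<^sup>*)\<close>.
\<close>

section \<open>Semiprime associative algebras\<close>

locale fd_algebra = finite_dimensional_vector_space sc Bas
  for sc :: "'k::field \<Rightarrow> 'a::ab_group_add \<Rightarrow> 'a" and Bas :: "'a set" +
  fixes m :: "'a \<Rightarrow> 'a \<Rightarrow> 'a"
  assumes bilinear: "bilinear_on sc UNIV m"
    and mult_assoc: "m (m x y) z = m x (m y z)"
begin

lemma mult_add_left: "m (x + y) z = m x z + m y z"
  and mult_add_right: "m x (y + z) = m x y + m x z"
  and mult_scale_left: "m (sc c x) y = sc c (m x y)"
  and mult_scale_right: "m x (sc c y) = sc c (m x y)"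
  using bilinear unfolding bilinear_on_def by blast+

lemma additive_mult_left: "additive (\<lambda>x. m x y)"
  by unfold_locales (rule mult_add_left)

lemma additive_mult_right: "additive (m x)"
  by unfold_locales (rule mult_add_right)

lemma l_null [simp]: "m 0 y = 0"
  using additive.zero[OF additive_mult_left] .

lemma r_null [simp]: "m x 0 = 0"
  using additive.zero[OF additive_mult_right] .

lemma mult_diff_left: "m (x - y) z = m x z - m y z"
  using additive.diff[OF additive_mult_left] .

lemma mult_diff_right: "m x (y - z) = m x y - m x z"
  using additive.diff[OF additive_mult_right] .

lemma span_mult_mem:
  assumes V: "subspace V" and ST: "\<And>a b. a \<in> S \<Longrightarrow> b \<in> T \<Longrightarrow> m a b \<in> V"
    and x: "x \<in> span S" and y: "y \<in> span T"
  shows "m x y \<in> V"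
proof -
  have "span T \<subseteq> {b. m a b \<in> V}" if "a \<in> S" for a
    using V ST[OF that] by (intro span_minimal)
      (auto simp: subspace_def mult_add_right mult_scale_right)
  then have "span S \<subseteq> {a. \<forall>b\<in>span T. m a b \<in> V}"
    using V by (intro span_minimal)
      (auto simp: subspace_def mult_add_left mult_scale_left subspace_add subspace_scale)
  then show ?thesis
    using x y by blast
qed

end

locale semiprime_algebra = fd_algebra sc Bas m
  for sc :: "'k::field \<Rightarrow> 'a::ab_group_add \<Rightarrow> 'a" and Bas m +
  fixes C :: "'a set"
  assumes subspace_C: "subspace C"
    and mult_closed: "x \<in> C \<Longrightarrow> y \<in> C \<Longrightarrow> m x y \<in> C"
    and square_zero_ideal:
      "alg_ideal sc C m J \<Longrightarrow> (\<And>x y. x \<in> J \<Longrightarrow> y \<in> J \<Longrightarrow> m x y = 0) \<Longrightarrow> J = {0}"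
begin

lemma alg_idealD:
  assumes "alg_ideal sc C m J"
  shows "subspace J" "J \<subseteq> C" "x \<in> J \<Longrightarrow> y \<in> C \<Longrightarrow> m x y \<in> J"
    "x \<in> J \<Longrightarrow> y \<in> C \<Longrightarrow> m y x \<in> J"
  using assms unfolding alg_ideal_def by auto

lemma square_zero_generators:
  assumes G: "Gen \<subseteq> C"
    and closed: "\<And>c g. c \<in> C \<Longrightarrow> g \<in> Gen \<Longrightarrow> m c g \<in> Gen \<and> m g c \<in> Gen"
    and zero: "\<And>g g'. g \<in> Gen \<Longrightarrow> g' \<in> Gen \<Longrightarrow> m g g' = 0"
  shows "Gen \<subseteq> {0}"
proof -
  have "alg_ideal sc C m (span Gen)"
    unfolding alg_ideal_def
  proof (intro conjI ballI)
    show "span Gen \<subseteq> C"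
      using G subspace_C by (rule span_minimal)
  next
    fix x y assume "x \<in> span Gen" "y \<in> C"
    then have "x \<in> span Gen" "y \<in> span C"
      by (auto intro: span_base)
    then show "m x y \<in> span Gen" "m y x \<in> span Gen"
      using closed span_base[of _ Gen]
      by (auto intro: span_mult_mem[of "span Gen" Gen C] span_mult_mem[of "span Gen" C Gen])
  qed simp
  moreover have "m x y = 0" if "x \<in> span Gen" "y \<in> span Gen" for x y
    using span_mult_mem[of "{0}" Gen Gen x y] zero that by simp
  ultimately have "span Gen = {0}"
    by (rule square_zero_ideal)
  then show ?thesis
    using span_superset by blast
qed

definition left_ideal :: "'a set \<Rightarrow> bool" where
  "left_ideal N \<longleftrightarrow> subspace N \<and> N \<subseteq> C \<and> (\<forall>x\<in>C. \<forall>y\<in>N. m x y \<in> N)"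

lemma left_idealD:
  assumes "left_ideal N"
  shows "subspace N" "N \<subseteq> C" "x \<in> C \<Longrightarrow> y \<in> N \<Longrightarrow> m x y \<in> N"
  using assms unfolding left_ideal_def by auto

lemma alg_ideal_imp_left_ideal: "alg_ideal sc C m J \<Longrightarrow> left_ideal J"
  unfolding alg_ideal_def left_ideal_def by blast

lemma left_ideal_annihilator:
  assumes "left_ideal N"
  shows "left_ideal {b \<in> N. m b x = 0}"
  using left_idealD[OF assms]
  by (auto simp: left_ideal_def subspace_def mult_add_left mult_scale_left mult_assoc)

lemma left_ideal_mult_right:
  assumes N: "left_ideal N" and x: "x \<in> C"
  shows "left_ideal ((\<lambda>b. m b x) ` N)"
  unfolding left_ideal_def subspace_def
proof (intro conjI ballI allI)
  note ND = left_idealD[OF N]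
  show "0 \<in> (\<lambda>b. m b x) ` N"
    using ND(1) subspace_0 by force
  show "(\<lambda>b. m b x) ` N \<subseteq> C"
    using ND(2) x mult_closed by blast
  fix c y y' assume "y \<in> (\<lambda>b. m b x) ` N" "y' \<in> (\<lambda>b. m b x) ` N"
  then obtain a b where ab: "a \<in> N" "b \<in> N" "y = m a x" "y' = m b x"
    by blast
  show "y + y' \<in> (\<lambda>b. m b x) ` N"
    using ab ND(1) subspace_add by (auto simp: mult_add_left intro!: image_eqI[of _ _ "a + b"])
  show "sc c y \<in> (\<lambda>b. m b x) ` N"
    using ab ND(1) subspace_scale by (auto simp: mult_scale_left intro!: image_eqI[of _ _ "sc c a"])
  show "m z y \<in> (\<lambda>b. m b x) ` N" if "z \<in> C" for z
    using ab that ND(3) by (auto simp: mult_assoc[symmetric] intro!: image_eqI[of _ _ "m z a"])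
qed

lemma left_ideal_square_zero:
  assumes N: "left_ideal N" and zero: "\<And>a b. a \<in> N \<Longrightarrow> b \<in> N \<Longrightarrow> m a b = 0"
  shows "N = {0}"
proof -
  note ND = left_idealD[OF N]
  let ?G = "{m a z | a z. a \<in> N \<and> z \<in> C}"
  have "?G \<subseteq> {0}"
  proof (rule square_zero_generators)
    show "?G \<subseteq> C"
      using ND(2) mult_closed by blast
  next
    fix c g assume "c \<in> C" "g \<in> ?G"
    then obtain a z where "a \<in> N" "z \<in> C" "g = m a z"
      by blast
    then show "m c g \<in> ?G \<and> m g c \<in> ?G"
      using \<open>c \<in> C\<close> ND(3) mult_closed
      by (metis (mono_tags, lifting) mem_Collect_eq mult_assoc)
  next
    fix g g' assume "g \<in> ?G" "g' \<in> ?G"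
    then obtain a z a' z' where "a \<in> N" "z \<in> C" "g = m a z" "a' \<in> N" "z' \<in> C" "g' = m a' z'"
      by blast
    moreover have "m g g' = m (m a (m z a')) z'"
      using calculation by (simp add: mult_assoc)
    ultimately show "m g g' = 0"
      using zero ND(3) by simp
  qed
  then have "m a z = 0" if "a \<in> N" "z \<in> C" for a z
    using that by blast
  then have "alg_ideal sc C m N"
    using ND subspace_0 unfolding alg_ideal_def by auto
  then show ?thesis
    using zero by (rule square_zero_ideal)
qed

lemma exists_minimal_left_ideal:
  assumes "left_ideal M" "M \<noteq> {0}"
  obtains N where "left_ideal N" "N \<noteq> {0}" "N \<subseteq> M"
    "\<And>N'. left_ideal N' \<Longrightarrow> N' \<subseteq> N \<Longrightarrow> N' \<noteq> {0} \<Longrightarrow> N' = N"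
proof -
  let ?P = "\<lambda>N. left_ideal N \<and> N \<noteq> {0} \<and> N \<subseteq> M"
  obtain N where N: "?P N" and least: "\<And>N'. ?P N' \<Longrightarrow> dim N \<le> dim N'"
    using ex_has_least_nat[of ?P M dim] assms by auto
  have "N' = N" if "left_ideal N'" "N' \<subseteq> N" "N' \<noteq> {0}" for N'
    using least[of N'] N that subspace_dim_equal[of N' N] left_idealD(1) by blast
  with N that show thesis
    by blast
qed

lemma left_ideal_has_idempotent:
  assumes "left_ideal M" "M \<noteq> {0}"
  shows "\<exists>e\<in>M. e \<noteq> 0 \<and> m e e = e"
proof -
  obtain N where N: "left_ideal N" "N \<noteq> {0}" "N \<subseteq> M"
    and minimal: "\<And>N'. left_ideal N' \<Longrightarrow> N' \<subseteq> N \<Longrightarrow> N' \<noteq> {0} \<Longrightarrow> N' = N"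
    using exists_minimal_left_ideal[OF assms] by blast
  note ND = left_idealD[OF N(1)]
  obtain a x where ax: "a \<in> N" "x \<in> N" "m a x \<noteq> 0"
    using left_ideal_square_zero[OF N(1)] N(2) by blast
  have "(\<lambda>b. m b x) ` N = N"
  proof (rule minimal)
    show "left_ideal ((\<lambda>b. m b x) ` N)"
      using N(1) ax(2) ND(2) by (blast intro: left_ideal_mult_right)
    show "(\<lambda>b. m b x) ` N \<subseteq> N"
      using ax(2) ND(2,3) by blast
    show "(\<lambda>b. m b x) ` N \<noteq> {0}"
      using ax by blast
  qed
  then obtain e where e: "e \<in> N" "m e x = x"
    using ax(2) by (metis imageE)
  have "{b \<in> N. m b x = 0} = {0}"
    using minimal[OF left_ideal_annihilator[OF N(1)]] ax ND(1) subspace_0 by blast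
  moreover have "m e e - e \<in> {b \<in> N. m b x = 0}"
    using e ND by (simp add: subspace_diff mult_diff_left mult_assoc subset_iff)
  ultimately have "m e e = e"
    by simp
  moreover have "e \<noteq> 0"
    using e ax by auto
  ultimately show ?thesis
    using e N(3) by blast
qed

lemma idempotent_refinement:
  assumes e: "m e e = e" and f: "m f f = f" and fe: "m f e = 0"
  defines "g \<equiv> e + f - m e f"
  shows "m g g = g" "m g e = e" "m f g = f"
proof -
  have efy: "m f (m e y) = 0" for y
    using fe by (simp add: mult_assoc[symmetric])
  have "m e (m e y) = m e y" "m f (m f y) = m f y" for y
    using e f by (simp_all add: mult_assoc[symmetric])
  then show "m g g = g" "m g e = e" "m f g = f"
    unfolding g_def using e f fe efy
    by (simp_all add: mult_add_left mult_add_right mult_diff_left mult_diff_right mult_assoc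
        algebra_simps)
qed

lemma right_annihilator_shrinks:
  assumes J: "alg_ideal sc C m J"
    and e: "e \<in> J" "m e e = e" and f: "f \<in> J" "f \<noteq> 0" "m f f = f" "m f e = 0"
  obtains g where "g \<in> J" "m g g = g" "{x \<in> J. m x g = 0} \<subset> {x \<in> J. m x e = 0}"
proof -
  note JD = alg_idealD[OF J]
  define g where "g = e + f - m e f"
  have g: "m g g = g" "m g e = e" "m f g = f"
    using idempotent_refinement[of e f] e f unfolding g_def by auto
  have "g \<in> J"
    unfolding g_def using e f JD by (auto intro: subspace_add subspace_diff)
  have "m x e = 0" if "m x g = 0" for x
  proof -
    have "m x e = m (m x g) e"
      using g(2) by (simp add: mult_assoc)
    with that show ?thesis
      by simp
  qed
  moreover have "f \<notin> {x \<in> J. m x g = 0}"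
    using g(3) f(2) by simp
  ultimately have "{x \<in> J. m x g = 0} \<subset> {x \<in> J. m x e = 0}"
    using f by blast
  with \<open>g \<in> J\<close> g(1) show thesis
    by (rule that)
qed

lemma ideal_has_right_unit:
  assumes J: "alg_ideal sc C m J"
  shows "\<exists>e\<in>J. m e e = e \<and> (\<forall>x\<in>J. m x e = x)"
proof -
  note JD = alg_idealD[OF J]
  define R where "R e = {x \<in> J. m x e = 0}" for e
  let ?P = "\<lambda>e. e \<in> J \<and> m e e = e"
  obtain e where e: "?P e" and least: "\<And>e'. ?P e' \<Longrightarrow> dim (R e) \<le> dim (R e')"
    using ex_has_least_nat[of ?P 0 "\<lambda>e. dim (R e)"] JD(1) subspace_0 by auto
  have R: "left_ideal (R e')" for e'
    unfolding R_def by (rule left_ideal_annihilator[OF alg_ideal_imp_left_ideal[OF J]])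
  have "R e = {0}"
  proof (rule ccontr)
    assume "R e \<noteq> {0}"
    then obtain f where f: "f \<in> R e" "f \<noteq> 0" "m f f = f"
      using left_ideal_has_idempotent[OF R] by blast
    then obtain g where g: "g \<in> J" "m g g = g" "R g \<subset> R e"
      using right_annihilator_shrinks[OF J] e unfolding R_def by blast
    then have "dim (R g) < dim (R e)"
      using R left_idealD(1) dim_psubset by (metis span_eq_iff)
    with least[of g] g(1,2) show False
      by simp
  qed
  moreover have "x - m x e \<in> R e" if "x \<in> J" for x
    using that e JD unfolding R_def by (auto intro: subspace_diff simp: mult_diff_left mult_assoc)
  ultimately show ?thesis
    using e by auto
qed

lemma right_unit_kernel_annihilated:
  assumes J: "alg_ideal sc C m J" and e: "e \<in> J" "\<forall>x\<in>J. m x e = x"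
    and z: "z \<in> C" and d: "d \<in> J" "m e d = 0"
  shows "m z d = 0"
proof -
  note JD = alg_idealD[OF J]
  define D where "D = {x \<in> J. m e x = 0}"
  have D_right: "m d z \<in> D" if "d \<in> D" "z \<in> C" for d z
    using that JD(3) unfolding D_def by (simp add: mult_assoc[symmetric])
  have J_kills_D: "m y d = 0" if "y \<in> J" "d \<in> D" for y d
    using that e(2) mult_assoc[of y e d] unfolding D_def by simp
  let ?G = "{m z d | z d. z \<in> C \<and> d \<in> D}"
  have "?G \<subseteq> {0}"
  proof (rule square_zero_generators)
    show "?G \<subseteq> C"
      using JD(2) mult_closed unfolding D_def by blast
  next
    fix c g assume "c \<in> C" "g \<in> ?G"
    then obtain z d where zd: "z \<in> C" "d \<in> D" "g = m z d"
      by blast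
    have "m c g = m (m c z) d" "m g c = m z (m d c)"
      using zd by (simp_all add: mult_assoc)
    then show "m c g \<in> ?G \<and> m g c \<in> ?G"
      using zd \<open>c \<in> C\<close> mult_closed D_right by blast
  next
    fix g g' assume "g \<in> ?G" "g' \<in> ?G"
    then obtain z d z' d' where zd: "z \<in> C" "d \<in> D" "g = m z d" "z' \<in> C" "d' \<in> D" "g' = m z' d'"
      by blast
    then have "m g g' = m z (m (m d z') d')"
      by (simp add: mult_assoc)
    then show "m g g' = 0"
      using zd D_right J_kills_D unfolding D_def by simp
  qed
  then show ?thesis
    using z d unfolding D_def by blast
qed

lemma right_unit_of_ideal_is_left_unit:
  assumes J: "alg_ideal sc C m J" and e: "e \<in> J" "\<forall>x\<in>J. m x e = x"
  shows "\<forall>x\<in>J. m e x = x"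
proof -
  note JD = alg_idealD[OF J]
  define D where "D = {x \<in> J. m e x = 0}"
  note C_kills_D = right_unit_kernel_annihilated[OF J e]
  have "subspace D"
    using JD(1) unfolding D_def subspace_def by (simp add: mult_add_right mult_scale_right)
  moreover have "m d z \<in> D" if "d \<in> D" "z \<in> C" for d z
    using that JD(3) unfolding D_def by (simp add: mult_assoc[symmetric])
  ultimately have "alg_ideal sc C m D"
    using JD C_kills_D subspace_0 unfolding alg_ideal_def D_def by auto
  then have "D = {0}"
    using C_kills_D JD(2) unfolding D_def by (intro square_zero_ideal) auto
  moreover have "x - m e x \<in> D" if x: "x \<in> J" for x
  proof -
    have "m e x \<in> J"
      using x e(1) JD(2,3) by blast
    then show ?thesis
      using x e JD(1) unfolding D_def
      by (simp add: subspace_diff mult_diff_right mult_assoc[symmetric])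
  qed
  ultimately show ?thesis
    by auto
qed

lemma ideal_has_unit:
  assumes "alg_ideal sc C m J"
  shows "\<exists>u\<in>J. \<forall>x\<in>J. m x u = x \<and> m u x = x"
  using ideal_has_right_unit[OF assms] right_unit_of_ideal_is_left_unit[OF assms] by blast

end

section \<open>Superalgebras with an odd-symmetric form\<close>

locale odd_symmetric_superalgebra = semiprime_algebra sc Bas m Ev
  for sc :: "'k::field \<Rightarrow> 'a::ab_group_add \<Rightarrow> 'a" and Bas m Ev +
  fixes Od :: "'a set" and B :: "'a \<Rightarrow> 'a \<Rightarrow> 'k"
  assumes subspace_Od: "subspace Od"
    and even_inter_odd: "Ev \<inter> Od = {0}"
    and even_odd_decomp: "\<exists>a\<in>Ev. \<exists>b\<in>Od. x = a + b"
    and mult_even_odd: "x \<in> Ev \<Longrightarrow> y \<in> Od \<Longrightarrow> m x y \<in> Od"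
    and mult_odd_even: "x \<in> Od \<Longrightarrow> y \<in> Ev \<Longrightarrow> m x y \<in> Od"
    and mult_odd_odd: "x \<in> Od \<Longrightarrow> y \<in> Od \<Longrightarrow> m x y \<in> Ev"
    and form_add_left: "B (x + y) z = B x z + B y z"
    and form_add_right: "B x (y + z) = B x y + B x z"
    and form_scale_left: "B (sc c x) y = c * B x y"
    and form_scale_right: "B x (sc c y) = c * B x y"
    and form_even_even: "x \<in> Ev \<Longrightarrow> y \<in> Ev \<Longrightarrow> B x y = 0"
    and form_odd_odd: "x \<in> Od \<Longrightarrow> y \<in> Od \<Longrightarrow> B x y = 0"
    and form_even_odd_sym: "x \<in> Ev \<Longrightarrow> y \<in> Od \<Longrightarrow> B x y = B y x"
    and form_assoc: "B (m x y) z = B x (m y z)"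
    and form_nondegenerate: "(\<And>y. B x y = 0) \<Longrightarrow> x = 0"
begin

lemma form_zero_left [simp]: "B 0 y = 0"
  and form_zero_right [simp]: "B x 0 = 0"
  and form_diff_left: "B (x - y) z = B x z - B y z"
  and form_diff_right: "B x (y - z) = B x y - B x z"
proof -
  interpret left: additive "\<lambda>x. B x y" for y
    by unfold_locales (rule form_add_left)
  interpret right: additive "B x" for x
    by unfold_locales (rule form_add_right)
  show "B 0 y = 0" "B x 0 = 0" "B (x - y) z = B x z - B y z" "B x (y - z) = B x y - B x z"
    by (simp_all add: left.zero right.zero left.diff right.diff)
qed

lemma even_odd_decompE:
  obtains a b where "a \<in> Ev" "b \<in> Od" "x = a + b"
  using even_odd_decomp by blast

lemma even_odd_decomp_unique:
  assumes "a \<in> Ev" "b \<in> Od" "a' \<in> Ev" "b' \<in> Od" "a + b = a' + b'"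
  shows "a = a'" "b = b'"
proof -
  have "a - a' = b' - b"
    using assms(5) by (simp add: algebra_simps)
  moreover have "a - a' \<in> Ev" "b' - b \<in> Od"
    using assms subspace_C subspace_Od by (auto intro: subspace_diff)
  ultimately have "a - a' = 0"
    using even_inter_odd by (metis Int_iff singletonD)
  then show "a = a'" "b = b'"
    using assms(5) by simp_all
qed

lemma form_sym: "B x y = B y x"
proof -
  obtain x0 x1 y0 y1 where "x0 \<in> Ev" "x1 \<in> Od" "x = x0 + x1" "y0 \<in> Ev" "y1 \<in> Od" "y = y0 + y1"
    by (meson even_odd_decompE)
  then show ?thesis
    using form_even_odd_sym[of x0 y1] form_even_odd_sym[of y0 x1]
    by (simp add: form_add_left form_add_right form_even_even form_odd_odd)
qed

lemma even_nondegenerate: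
  assumes "x \<in> Ev" "\<And>y. y \<in> Od \<Longrightarrow> B x y = 0"
  shows "x = 0"
proof (rule form_nondegenerate)
  fix y
  obtain a b where "a \<in> Ev" "b \<in> Od" "y = a + b"
    by (rule even_odd_decompE)
  then show "B x y = 0"
    using assms by (simp add: form_add_right form_even_even)
qed

lemma odd_nondegenerate:
  assumes "x \<in> Od" "\<And>y. y \<in> Ev \<Longrightarrow> B x y = 0"
  shows "x = 0"
proof (rule form_nondegenerate)
  fix y
  obtain a b where "a \<in> Ev" "b \<in> Od" "y = a + b"
    by (rule even_odd_decompE)
  then show "B x y = 0"
    using assms by (simp add: form_add_right form_odd_odd)
qed

lemma even_unit_is_unit:
  assumes one: "one \<in> Ev" "\<And>x. x \<in> Ev \<Longrightarrow> m x one = x \<and> m one x = x"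
  shows "m one y = y \<and> m y one = y"
proof -
  have "m one w = w \<and> m w one = w" if w: "w \<in> Od" for w
  proof
    have "B (m one w) z = B w z" if z: "z \<in> Ev" for z
      using one z form_assoc form_sym by metis
    then show "m one w = w"
      using odd_nondegenerate[of "m one w - w"] w one(1) mult_even_odd subspace_Od
      by (simp add: form_diff_left subspace_diff)
    have "B (m w one) z = B w z" if z: "z \<in> Ev" for z
      using one z form_assoc by metis
    then show "m w one = w"
      using odd_nondegenerate[of "m w one - w"] w one(1) mult_odd_even subspace_Od
      by (simp add: form_diff_left subspace_diff)
  qed
  moreover obtain a b where "a \<in> Ev" "b \<in> Od" "y = a + b"
    by (rule even_odd_decompE)
  ultimately show ?thesis
    using one by (simp add: mult_add_left mult_add_right)
qed

lemma form_orthogonal_span: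
  assumes "\<And>s. s \<in> S \<Longrightarrow> B s w = 0" "y \<in> span S"
  shows "B y w = 0"
proof -
  have "span S \<subseteq> {y. B y w = 0}"
    using assms(1) by (intro span_minimal) (auto simp: subspace_def form_add_left form_scale_left)
  then show ?thesis
    using assms(2) by blast
qed

lemma odd_dual_vector:
  assumes "finite S" "S \<subseteq> Ev" "x \<in> Ev" "x \<notin> span S"
  shows "\<exists>w\<in>Od. B x w = 1 \<and> (\<forall>s\<in>S. B s w = 0)"
  using assms
proof (induction S arbitrary: x rule: finite_induct)
  case empty
  then obtain w where w: "w \<in> Od" "B x w \<noteq> 0"
    using even_nondegenerate[of x] by auto
  then show ?case
    using subspace_Od subspace_scale[of Od w "inverse (B x w)"]
    by (intro bexI[of _ "sc (inverse (B x w)) w"]) (auto simp: form_scale_right)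
next
  case (insert a S)
  show ?case
  proof (cases "a \<in> span S")
    case True
    then obtain w where "w \<in> Od" "B x w = 1" "\<forall>s\<in>S. B s w = 0"
      using insert span_redundant by fastforce
    then show ?thesis
      using form_orthogonal_span[of S w a] True by auto
  next
    case False
    then obtain v where v: "v \<in> Od" "B a v = 1" "\<forall>s\<in>S. B s v = 0"
      using insert by blast
    define x' where "x' = x - sc (B x v) a"
    have "x' \<in> Ev"
      unfolding x'_def using insert subspace_C by (auto intro: subspace_diff subspace_scale)
    moreover have "x' \<notin> span S"
      using insert.prems(3) span_breakdown_eq unfolding x'_def by blast
    ultimately obtain w where w: "w \<in> Od" "B x' w = 1" "\<forall>s\<in>S. B s w = 0"
      using insert by blast
    have "B x' v = 0"
      unfolding x'_def using v by (simp add: form_diff_left form_scale_left)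
    define w' where "w' = w - sc (B a w) v"
    have "w' \<in> Od"
      unfolding w'_def using v w subspace_Od by (auto intro: subspace_diff subspace_scale)
    moreover have "B x w' = 1"
      using \<open>B x' v = 0\<close> w v unfolding w'_def x'_def
      by (simp add: form_diff_left form_diff_right form_scale_left form_scale_right mult.commute)
    moreover have "\<forall>s\<in>insert a S. B s w' = 0"
      unfolding w'_def using v w by (simp add: form_diff_right form_scale_right)
    ultimately show ?thesis
      by blast
  qed
qed

lemma odd_dual_basis:
  assumes S: "finite S" "S \<subseteq> Ev" "independent S"
  obtains d where "\<And>s. s \<in> S \<Longrightarrow> d s \<in> Od" "\<And>s. s \<in> S \<Longrightarrow> B s (d s) = 1"
    "\<And>s t. s \<in> S \<Longrightarrow> t \<in> S \<Longrightarrow> t \<noteq> s \<Longrightarrow> B t (d s) = 0"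
proof -
  have "\<exists>v\<in>Od. B s v = 1 \<and> (\<forall>t\<in>S - {s}. B t v = 0)" if s: "s \<in> S" for s
  proof (rule odd_dual_vector)
    show "s \<notin> span (S - {s})"
      using S(3) s unfolding dependent_def by blast
  qed (use S s in auto)
  then obtain d where "\<And>s. s \<in> S \<Longrightarrow> d s \<in> Od \<and> B s (d s) = 1 \<and> (\<forall>t\<in>S - {s}. B t (d s) = 0)"
    by metis
  with that show thesis
    by blast
qed

lemma odd_represents_functional:
  assumes add: "\<forall>x\<in>Ev. \<forall>y\<in>Ev. f (x + y) = f x + f y"
    and scale: "\<forall>c. \<forall>x\<in>Ev. f (sc c x) = c * f x"
  shows "\<exists>w\<in>Od. \<forall>y\<in>Ev. B y w = f y"
proof -
  obtain S where S: "S \<subseteq> Ev" "independent S" "Ev \<subseteq> span S"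
    by (rule basis_exists[of Ev]) blast
  have "finite S"
    using S(2) by (rule finiteI_independent)
  have "span S = Ev"
    using S span_minimal[OF S(1) subspace_C] by blast
  obtain d where d: "\<And>s. s \<in> S \<Longrightarrow> d s \<in> Od" "\<And>s. s \<in> S \<Longrightarrow> B s (d s) = 1"
    "\<And>s t. s \<in> S \<Longrightarrow> t \<in> S \<Longrightarrow> t \<noteq> s \<Longrightarrow> B t (d s) = 0"
    using odd_dual_basis[OF \<open>finite S\<close> S(1,2)] by blast
  define w where "w = (\<Sum>s\<in>S. sc (f s) (d s))"
  interpret pairing: additive "B t" for t
    by unfold_locales (rule form_add_right)
  have "w \<in> Od"
    unfolding w_def using d(1) subspace_Od by (auto intro: subspace_sum subspace_scale)
  have "B t w = f t" if t: "t \<in> S" for t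
  proof -
    have "B t w = (\<Sum>s\<in>S. f s * B t (d s))"
      unfolding w_def by (simp add: pairing.sum form_scale_right)
    also have "\<dots> = f t * B t (d t)"
    proof -
      have "(\<Sum>s\<in>S - {t}. f s * B t (d s)) = 0"
        using d(3) t by (intro sum.neutral) auto
      then show ?thesis
        using \<open>finite S\<close> t by (simp add: sum.remove[of S t])
    qed
    finally show ?thesis
      using d(2) t by simp
  qed
  moreover have "f 0 = 0"
    using scale subspace_0[OF subspace_C] by (metis mult_zero_left scale_zero_left)
  ultimately have "span S \<subseteq> {y \<in> Ev. B y w = f y}"
    using S(1) add scale subspace_C
    by (intro span_minimal) (auto simp: subspace_def form_add_left form_scale_left)
  then show ?thesis
    using \<open>w \<in> Od\<close> \<open>span S = Ev\<close> by blast
qed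

definition even_part :: "'a \<Rightarrow> 'a" where
  "even_part x = (SOME a. a \<in> Ev \<and> x - a \<in> Od)"

lemma even_part: "even_part x \<in> Ev" "x - even_part x \<in> Od"
proof -
  obtain a b where "a \<in> Ev" "b \<in> Od" "x = a + b"
    by (rule even_odd_decompE)
  then have "\<exists>a. a \<in> Ev \<and> x - a \<in> Od"
    by (intro exI[of _ a]) simp
  then show "even_part x \<in> Ev" "x - even_part x \<in> Od"
    unfolding even_part_def by (metis (no_types, lifting) someI_ex)+
qed

lemma even_part_eq: "a \<in> Ev \<Longrightarrow> b \<in> Od \<Longrightarrow> even_part (a + b) = a"
  using even_odd_decomp_unique(1)[of "even_part (a + b)" "a + b - even_part (a + b)" a b] even_part
  by simp

lemma even_part_add: "even_part (x + y) = even_part x + even_part y"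
proof -
  have "x + y = (even_part x + even_part y) + ((x - even_part x) + (y - even_part y))"
    by simp
  then show ?thesis
    using even_part subspace_C subspace_Od
    by (metis even_part_eq subspace_add)
qed

lemma even_part_scale: "even_part (sc c x) = sc c (even_part x)"
proof -
  have "sc c x = sc c (even_part x) + sc c (x - even_part x)"
    by (simp add: scale_right_diff_distrib)
  then show ?thesis
    using even_part subspace_C subspace_Od
    by (metis even_part_eq subspace_scale)
qed

lemma graded_idealD:
  assumes "graded_ideal sc m Ev Od I"
  shows "subspace I" "a \<in> Ev \<Longrightarrow> b \<in> Od \<Longrightarrow> a + b \<in> I \<Longrightarrow> a \<in> I \<and> b \<in> I"
    "x \<in> I \<Longrightarrow> m x y \<in> I" "x \<in> I \<Longrightarrow> m y x \<in> I"
  using assms unfolding graded_ideal_def by auto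

lemma graded_ideal_inter_orthogonal:
  assumes G: "graded_ideal sc m Ev Od G"
  shows "graded_ideal sc m Ev Od (G \<inter> {y. \<forall>x\<in>G. B x y = 0})"
proof -
  note GD = graded_idealD[OF G]
  let ?H = "G \<inter> {y. \<forall>x\<in>G. B x y = 0}"
  have homogeneous: "B g a = 0 \<and> B g b = 0"
    if ab: "a \<in> Ev" "b \<in> Od" "a + b \<in> ?H" and g: "g \<in> G" for a b g
  proof -
    obtain g0 g1 where gg: "g0 \<in> Ev" "g1 \<in> Od" "g = g0 + g1"
      by (rule even_odd_decompE)
    then have "g0 \<in> G" "g1 \<in> G"
      using GD(2) g by auto
    then have "B g0 (a + b) = 0" "B g1 (a + b) = 0"
      using ab(3) by auto
    then show ?thesis
      using ab gg by (simp add: form_add_left form_add_right form_even_even form_odd_odd)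
  qed
  have absorbing: "B g (m x y) = 0 \<and> B g (m y x) = 0" if "x \<in> ?H" "g \<in> G" for g x y
  proof -
    have "B g (m x y) = B (m y g) x"
      by (metis form_assoc form_sym)
    moreover have "B g (m y x) = B (m g y) x"
      by (rule form_assoc[symmetric])
    ultimately show ?thesis
      using that GD(3,4) by auto
  qed
  show ?thesis
    unfolding graded_ideal_def
  proof (intro conjI ballI allI impI)
    show "subspace ?H"
      using GD(1) by (intro subspace_inter) (auto simp: subspace_def form_add_right form_scale_right)
  next
    fix a b assume "a \<in> Ev" "b \<in> Od" "a + b \<in> ?H"
    then show "a \<in> ?H" "b \<in> ?H"
      using homogeneous GD(2) by auto
  next
    fix x y assume "x \<in> ?H"
    then show "m x y \<in> ?H" "m y x \<in> ?H"
      using absorbing GD(3,4) by auto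
  qed
qed

lemma span_odd_products_ideal: "alg_ideal sc Ev m (span {m p q | p q. p \<in> Od \<and> q \<in> Od})"
  unfolding alg_ideal_def
proof (intro conjI ballI)
  let ?P = "{m p q | p q. p \<in> Od \<and> q \<in> Od}"
  show "span ?P \<subseteq> Ev"
    using mult_odd_odd subspace_C by (intro span_minimal) auto
  have "m a c \<in> ?P" "m c a \<in> ?P" if a: "a \<in> ?P" and c: "c \<in> Ev" for a c
  proof -
    obtain p q where "p \<in> Od" "q \<in> Od" "a = m p q"
      using a by blast
    moreover have "m a c = m p (m q c)" "m c a = m (m c p) q"
      using calculation by (simp_all add: mult_assoc)
    ultimately show "m a c \<in> ?P" "m c a \<in> ?P"
      using c mult_odd_even mult_even_odd by blast+
  qed
  then have closed: "m a c \<in> span ?P" "m c a \<in> span ?P" if "a \<in> ?P" "c \<in> Ev" for a c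
    using that by (meson span_base)+
  fix x y assume x: "x \<in> span ?P" and "y \<in> Ev"
  then have y: "y \<in> span Ev"
    by (simp add: span_base)
  show "m x y \<in> span ?P"
    by (rule span_mult_mem[OF subspace_span _ x y]) (rule closed)
  show "m y x \<in> span ?P"
    by (rule span_mult_mem[OF subspace_span _ y x]) (rule closed)
qed simp

lemma ideal_unit_central:
  assumes J: "alg_ideal sc Ev m J" and u: "u \<in> J" "\<And>x. x \<in> J \<Longrightarrow> m x u = x \<and> m u x = x"
  shows "m u x = m x u"
proof -
  note JD = alg_idealD[OF J]
  have even: "m u a = m a u" if a: "a \<in> Ev" for a
  proof -
    have "m u a = m (m u a) u"
      using u JD a by metis
    also have "\<dots> = m u (m a u)"
      by (rule mult_assoc)
    also have "\<dots> = m a u"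
      using u JD a by metis
    finally show ?thesis .
  qed
  have odd: "m u b = m b u" if b: "b \<in> Od" for b
  proof -
    have "B (m u b) z = B (m b u) z" if z: "z \<in> Ev" for z
      using even[OF z] by (metis form_assoc form_sym)
    moreover have "m u b - m b u \<in> Od"
      using b u(1) JD(2) mult_even_odd mult_odd_even subspace_Od by (blast intro: subspace_diff)
    ultimately show ?thesis
      using odd_nondegenerate[of "m u b - m b u"] by (simp add: form_diff_left)
  qed
  obtain a b where "a \<in> Ev" "b \<in> Od" "x = a + b"
    by (rule even_odd_decompE)
  then show ?thesis
    using even odd by (simp add: mult_add_left mult_add_right)
qed

lemma central_idempotent_graded_ideal:
  assumes u: "u \<in> Ev" "m u u = u" and central: "\<And>x. m u x = m x u"
  shows "graded_ideal sc m Ev Od {x. m u x = x}"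
  unfolding graded_ideal_def
proof (intro conjI ballI allI impI)
  let ?K = "{x. m u x = x}"
  show "subspace ?K"
    by (auto simp: subspace_def mult_add_right mult_scale_right)
next
  fix a b assume ab: "a \<in> Ev" "b \<in> Od" "a + b \<in> {x. m u x = x}"
  then have "m u a + m u b = a + b" "m u a \<in> Ev" "m u b \<in> Od"
    using u(1) mult_closed mult_even_odd by (auto simp: mult_add_right)
  then show "a \<in> {x. m u x = x}" "b \<in> {x. m u x = x}"
    using even_odd_decomp_unique ab by auto
next
  fix x y assume "x \<in> {x. m u x = x}"
  moreover have "m u (m y x) = m y (m u x)"
    using central[of y] by (simp add: mult_assoc[symmetric])
  ultimately show "m x y \<in> {x. m u x = x}" "m y x \<in> {x. m u x = x}"
    by (simp_all add: mult_assoc[symmetric])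
qed

lemma central_idempotent_nondeg:
  assumes u: "m u u = u" and central: "\<And>x. m u x = m x u"
  shows "nondeg_on B {x. m u x = x}"
  unfolding nondeg_on_def
proof (intro ballI impI)
  fix k assume k: "k \<in> {x. m u x = x}" and orth: "\<forall>z\<in>{x. m u x = x}. B k z = 0"
  show "k = 0"
  proof (rule form_nondegenerate)
    fix y
    \<comment> \<open>y splits as u y, which is fixed by u, plus y - u y, which u kills\<close>
    have "m u (m u y) = m u y"
      using u by (simp add: mult_assoc[symmetric])
    moreover have "B k (y - m u y) = 0"
    proof -
      have "m k u = k"
        using k central[of k] by simp
      then have "B k (y - m u y) = B (m k u) (y - m u y)"
        by simp
      also have "\<dots> = B k (m u y - m (m u u) y)"
        by (simp add: form_assoc mult_diff_right mult_assoc)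
      also have "\<dots> = 0"
        using u by simp
      finally show ?thesis .
    qed
    ultimately show "B k y = 0"
      using orth by (simp add: form_diff_right)
  qed
qed

definition to_semidirect :: "'a \<Rightarrow> 'a \<times> ('a \<Rightarrow> 'k)" where
  "to_semidirect x = (even_part x, \<lambda>z. if z \<in> Ev then B (x - even_part x) z else 0)"

lemma to_semidirect_even_odd:
  assumes "a \<in> Ev" "b \<in> Od"
  shows "to_semidirect (a + b) = (a, \<lambda>z. if z \<in> Ev then B b z else 0)"
  using even_part_eq[OF assms] by (auto simp: to_semidirect_def fun_eq_iff)

lemma restricted_form_in_dual: "(\<lambda>z. if z \<in> Ev then B w z else 0) \<in> dual_sp sc Ev"
  using subspace_C by (auto simp: dual_sp_def form_add_right form_scale_right subspace_add subspace_scale)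

lemma dual_sp_represented:
  assumes "f \<in> dual_sp sc Ev"
  obtains w where "w \<in> Od" "(\<lambda>z. if z \<in> Ev then B w z else 0) = f"
proof -
  have f: "\<forall>x\<in>Ev. \<forall>y\<in>Ev. f (x + y) = f x + f y" "\<forall>c. \<forall>x\<in>Ev. f (sc c x) = c * f x"
    "\<And>z. z \<notin> Ev \<Longrightarrow> f z = 0"
    using assms unfolding dual_sp_def by blast+
  then obtain w where w: "w \<in> Od" "\<forall>z\<in>Ev. B z w = f z"
    using odd_represents_functional by blast
  have "(\<lambda>z. if z \<in> Ev then B w z else 0) = f"
  proof
    fix z
    show "(if z \<in> Ev then B w z else 0) = f z"
      using w(2) f(3)[of z] form_sym[of w z] by simp
  qed
  with w(1) show thesis
    by (rule that)
qed

lemma to_semidirect_add: "to_semidirect (x + y) = sdp_add (to_semidirect x) (to_semidirect y)"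
proof -
  have odd: "x + y - even_part (x + y) = (x - even_part x) + (y - even_part y)"
    by (simp add: even_part_add)
  show ?thesis
    unfolding to_semidirect_def sdp_add_def odd
    by (auto simp: even_part_add form_add_left fun_eq_iff)
qed

lemma to_semidirect_scale: "to_semidirect (sc c x) = sdp_scale sc c (to_semidirect x)"
proof -
  have odd: "sc c x - even_part (sc c x) = sc c (x - even_part x)"
    by (simp add: even_part_scale scale_right_diff_distrib)
  show ?thesis
    unfolding to_semidirect_def sdp_scale_def odd
    by (auto simp: even_part_scale form_scale_left fun_eq_iff)
qed

lemma inj_to_semidirect: "inj to_semidirect"
proof (rule injI)
  fix x y assume eq: "to_semidirect x = to_semidirect y"
  have "(x - even_part x) - (y - even_part y) = 0"
  proof (rule odd_nondegenerate)
    show "(x - even_part x) - (y - even_part y) \<in> Od"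
      using even_part subspace_Od by (blast intro: subspace_diff)
    show "B ((x - even_part x) - (y - even_part y)) z = 0" if "z \<in> Ev" for z
      using fun_cong[OF arg_cong[OF eq, of snd], of z] that
      by (simp add: to_semidirect_def form_diff_left)
  qed
  moreover have "even_part x = even_part y"
    using eq by (simp add: to_semidirect_def)
  ultimately show "x = y"
    by simp
qed

lemma range_to_semidirect: "range to_semidirect = sdp_carrier sc Ev"
  unfolding sdp_carrier_def
proof
  show "range to_semidirect \<subseteq> Ev \<times> dual_sp sc Ev"
    using even_part restricted_form_in_dual by (auto simp: to_semidirect_def)
  show "Ev \<times> dual_sp sc Ev \<subseteq> range to_semidirect"
  proof clarify
    fix s f assume s: "s \<in> Ev" and f: "f \<in> dual_sp sc Ev"
    obtain w where w: "w \<in> Od" "(\<lambda>z. if z \<in> Ev then B w z else 0) = f"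
      using f by (rule dual_sp_represented)
    then have "to_semidirect (s + w) = (s, f)"
      using to_semidirect_even_odd[OF s w(1)] by simp
    then show "(s, f) \<in> range to_semidirect"
      by (metis rangeI)
  qed
qed

lemma to_semidirect_even: "to_semidirect ` Ev = Ev \<times> {\<lambda>_. 0}"
proof -
  have "to_semidirect a = (a, \<lambda>_. 0)" if "a \<in> Ev" for a
    using to_semidirect_even_odd[OF that subspace_0[OF subspace_Od]] by (simp add: fun_eq_iff)
  then show ?thesis
    by force
qed

lemma to_semidirect_odd: "to_semidirect ` Od = {0} \<times> dual_sp sc Ev"
proof
  have odd: "to_semidirect b = (0, \<lambda>z. if z \<in> Ev then B b z else 0)" if "b \<in> Od" for b
    using to_semidirect_even_odd[OF subspace_0[OF subspace_C] that] by simp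
  then show "to_semidirect ` Od \<subseteq> {0} \<times> dual_sp sc Ev"
    using restricted_form_in_dual by auto
  show "{0} \<times> dual_sp sc Ev \<subseteq> to_semidirect ` Od"
  proof clarify
    fix f assume "f \<in> dual_sp sc Ev"
    then obtain w where "w \<in> Od" "(\<lambda>z. if z \<in> Ev then B w z else 0) = f"
      by (rule dual_sp_represented)
    then show "(0, f) \<in> to_semidirect ` Od"
      using odd by (intro image_eqI[of _ _ w]) simp_all
  qed
qed

end

section \<open>The \<open>B\<close>-irreducible non-simple case\<close>

locale irreducible_nonsimple_superalgebra = odd_symmetric_superalgebra sc Bas m Ev Od B
  for sc :: "'k::field \<Rightarrow> 'a::ab_group_add \<Rightarrow> 'a" and Bas m Ev Od B +
  assumes irreducible: "B_irreducible sc m Ev Od B"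
    and not_simple: "\<not> simple_superalg sc m Ev Od"
begin

lemma exists_unit:
  obtains one where "one \<in> Ev" "one \<noteq> 0" "\<And>y. m one y = y \<and> m y one = y"
proof -
  have "Ev \<noteq> {0}"
  proof
    assume Ev: "Ev = {0}"
    have "x = 0" for x :: 'a
    proof -
      obtain a b where "a \<in> Ev" "b \<in> Od" "x = a + b"
        by (rule even_odd_decompE)
      then show ?thesis
        using odd_nondegenerate[of b] Ev by simp
    qed
    then show False
      using irreducible unfolding B_irreducible_def by auto
  qed
  moreover have "alg_ideal sc Ev m Ev"
    using subspace_C mult_closed unfolding alg_ideal_def by blast
  then obtain one where one: "one \<in> Ev" "\<And>x. x \<in> Ev \<Longrightarrow> m x one = x \<and> m one x = x"
    using ideal_has_unit by blast
  moreover have "one \<noteq> 0"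
  proof
    assume "one = 0"
    then have "x = 0" if "x \<in> Ev" for x
      using one(2)[OF that] by simp
    with \<open>Ev \<noteq> {0}\<close> show False
      using one(1) by blast
  qed
  ultimately show thesis
    using that even_unit_is_unit by blast
qed

lemma even_simple:
  assumes J: "alg_ideal sc Ev m J"
  shows "J = {0} \<or> J = Ev"
proof -
  note JD = alg_idealD[OF J]
  obtain u where u: "u \<in> J" "\<And>x. x \<in> J \<Longrightarrow> m x u = x \<and> m u x = x"
    using ideal_has_unit[OF J] by blast
  have "u \<in> Ev" "m u u = u"
    using u JD(2) by auto
  moreover have "m u x = m x u" for x
    using ideal_unit_central[OF J u] .
  ultimately have "{x. m u x = x} = {0} \<or> {x. m u x = x} = UNIV"
    using irreducible central_idempotent_graded_ideal central_idempotent_nondeg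
    unfolding B_irreducible_def by blast
  moreover obtain one where one: "one \<in> Ev" "\<And>y. m one y = y \<and> m y one = y"
    using exists_unit by blast
  ultimately have "u = 0 \<or> m u one = one"
    using \<open>m u u = u\<close> by blast
  then consider "u = 0" | "u = one"
    using one(2)[of u] by auto
  then show ?thesis
  proof cases
    case 1
    then have "x = 0" if "x \<in> J" for x
      using u(2)[OF that] by simp
    then show ?thesis
      using JD(1) subspace_0 by blast
  next
    case 2
    then have "x \<in> J" if "x \<in> Ev" for x
      using JD(4)[OF u(1) that] one(2)[of x] by simp
    then show ?thesis
      using JD(2) by blast
  qed
qed

lemma exists_isotropic_graded_ideal:
  obtains H where "graded_ideal sc m Ev Od H" "H \<noteq> {0}" "\<And>h k. h \<in> H \<Longrightarrow> k \<in> H \<Longrightarrow> B h k = 0"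
proof -
  obtain one where "one \<in> Ev" "one \<noteq> 0" "\<And>y. m one y = y \<and> m y one = y"
    using exists_unit by blast
  then have "\<exists>x y. m x y \<noteq> 0"
    by metis
  then obtain G where G: "graded_ideal sc m Ev Od G" "G \<noteq> {0}" "G \<noteq> UNIV"
    using not_simple unfolding simple_superalg_def by blast
  define H where "H = G \<inter> {y. \<forall>x\<in>G. B x y = 0}"
  have "H \<noteq> {0}"
  proof
    assume "H = {0}"
    moreover have "x \<in> H" if "x \<in> G" "\<forall>y\<in>G. B x y = 0" for x
      using that form_sym[of _ x] unfolding H_def by auto
    ultimately have "nondeg_on B G"
      unfolding nondeg_on_def by blast
    then show False
      using G irreducible unfolding B_irreducible_def by blast
  qed
  moreover have "graded_ideal sc m Ev Od H"
    unfolding H_def using G(1) by (rule graded_ideal_inter_orthogonal)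
  ultimately show thesis
    using that H_def by blast
qed

lemma isotropic_graded_ideal_inter_even:
  assumes H: "graded_ideal sc m Ev Od H" and iso: "\<And>h k. h \<in> H \<Longrightarrow> k \<in> H \<Longrightarrow> B h k = 0"
  shows "H \<inter> Ev = {0}"
proof -
  note HD = graded_idealD[OF H]
  obtain one where one: "one \<in> Ev" "one \<noteq> 0" "\<And>y. m one y = y \<and> m y one = y"
    using exists_unit by blast
  have "alg_ideal sc Ev m (H \<inter> Ev)"
    unfolding alg_ideal_def using HD(1,3,4) subspace_C mult_closed
    by (auto intro: subspace_inter)
  moreover have "H \<inter> Ev \<noteq> Ev"
  proof
    assume "H \<inter> Ev = Ev"
    then have "z \<in> H" for z
      using HD(3)[of one z] one by auto
    then have "B one z = 0" for z
      using iso by blast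
    then show False
      using one(2) form_nondegenerate by blast
  qed
  ultimately show ?thesis
    using even_simple by blast
qed

lemma isotropic_odd_mult_odd:
  assumes H: "graded_ideal sc m Ev Od H" and iso: "\<And>h k. h \<in> H \<Longrightarrow> k \<in> H \<Longrightarrow> B h k = 0"
    and p: "p \<in> H \<inter> Od" and w: "w \<in> Od"
  shows "m p w = 0"
proof -
  note HD = graded_idealD[OF H]
  have odd_products_vanish: "m q q' = 0" if "q \<in> H \<inter> Od" "q' \<in> H \<inter> Od" for q q'
  proof (rule even_nondegenerate)
    show "m q q' \<in> Ev"
      using that mult_odd_odd by blast
    show "B (m q q') z = 0" for z
      using that HD(3) iso by (simp add: form_assoc)
  qed
  let ?G = "{m q v | q v. q \<in> H \<inter> Od \<and> v \<in> Od}"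
  have "?G \<subseteq> {0}"
  proof (rule square_zero_generators)
    show "?G \<subseteq> Ev"
      using mult_odd_odd by blast
  next
    fix c g assume c: "c \<in> Ev" and "g \<in> ?G"
    then obtain q v where qv: "q \<in> H \<inter> Od" "v \<in> Od" "g = m q v"
      by blast
    have "m c g = m (m c q) v" "m g c = m q (m v c)"
      using qv by (simp_all add: mult_assoc)
    moreover have "m c q \<in> H \<inter> Od" "m v c \<in> Od"
      using qv c HD(4) mult_even_odd mult_odd_even by auto
    ultimately show "m c g \<in> ?G \<and> m g c \<in> ?G"
      using qv by blast
  next
    fix g g' assume "g \<in> ?G" "g' \<in> ?G"
    then obtain q v q' v' where qv: "q \<in> H \<inter> Od" "v \<in> Od" "g = m q v"
      "q' \<in> H \<inter> Od" "v' \<in> Od" "g' = m q' v'"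
      by blast
    then have "m v (m q' v') \<in> H \<inter> Od"
      using HD(3,4) mult_odd_odd mult_odd_even by auto
    then show "m g g' = 0"
      using qv odd_products_vanish by (simp add: mult_assoc)
  qed
  then show ?thesis
    using p w by blast
qed

lemma odd_mult_isotropic_odd:
  assumes H: "graded_ideal sc m Ev Od H" and iso: "\<And>h k. h \<in> H \<Longrightarrow> k \<in> H \<Longrightarrow> B h k = 0"
    and p: "p \<in> H \<inter> Od" and w: "w \<in> Od"
  shows "m w p = 0"
proof (rule even_nondegenerate)
  show "m w p \<in> Ev"
    using p w mult_odd_odd by blast
  show "B (m w p) z = 0" if "z \<in> Od" for z
    using isotropic_odd_mult_odd[OF H iso p that] by (simp add: form_assoc)
qed

lemma odd_mult_odd_zero:
  assumes "x \<in> Od" "y \<in> Od"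
  shows "m x y = 0"
proof -
  obtain H where H: "graded_ideal sc m Ev Od H" "H \<noteq> {0}"
    and iso: "\<And>h k. h \<in> H \<Longrightarrow> k \<in> H \<Longrightarrow> B h k = 0"
    using exists_isotropic_graded_ideal by blast
  note HD = graded_idealD[OF H(1)]
  obtain h where h: "h \<in> H" "h \<noteq> 0"
    using H(2) HD(1) subspace_0 by blast
  obtain h0 h1 where hh: "h0 \<in> Ev" "h1 \<in> Od" "h = h0 + h1"
    by (rule even_odd_decompE)
  then have "h0 \<in> H \<inter> Ev" "h1 \<in> H \<inter> Od"
    using HD(2) h by auto
  then have "h1 \<in> H \<inter> Od" "h1 \<noteq> 0"
    using isotropic_graded_ideal_inter_even[OF H(1) iso] h hh by auto
  let ?P = "{m p q | p q. p \<in> Od \<and> q \<in> Od}"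
  have "span ?P \<noteq> Ev"
  proof
    assume P: "span ?P = Ev"
    have "B s h1 = 0" if "s \<in> ?P" for s
    proof -
      obtain p q where "p \<in> Od" "q \<in> Od" "s = m p q"
        using \<open>s \<in> ?P\<close> by blast
      then show ?thesis
        using odd_mult_isotropic_odd[OF H(1) iso \<open>h1 \<in> H \<inter> Od\<close>]
        by (simp add: form_assoc)
    qed
    then have "B h1 e = 0" if "e \<in> Ev" for e
      using form_orthogonal_span[of ?P h1 e] P that form_sym[of h1 e] by simp
    then show False
      using odd_nondegenerate \<open>h1 \<in> H \<inter> Od\<close> \<open>h1 \<noteq> 0\<close> by blast
  qed
  then have "span ?P = {0}"
    using even_simple[OF span_odd_products_ideal] by blast
  then show ?thesis
    using assms span_base[of "m x y" ?P] by blast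
qed

lemma to_semidirect_mult: "to_semidirect (m x y) = sdp_mult Ev m (to_semidirect x) (to_semidirect y)"
proof -
  obtain x0 x1 y0 y1 where X: "x0 \<in> Ev" "x1 \<in> Od" "x = x0 + x1" "y0 \<in> Ev" "y1 \<in> Od" "y = y0 + y1"
    by (meson even_odd_decompE)
  then have "m x y = m x0 y0 + (m x0 y1 + m x1 y0)"
    using odd_mult_odd_zero by (simp add: mult_add_left mult_add_right algebra_simps)
  moreover have "m x0 y0 \<in> Ev" "m x0 y1 + m x1 y0 \<in> Od"
    using X mult_closed mult_even_odd mult_odd_even subspace_Od by (auto intro: subspace_add)
  moreover have "B (m x0 y1 + m x1 y0) z = B y1 (m z x0) + B x1 (m y0 z)" for z
    by (metis form_add_left form_assoc form_sym)
  ultimately show ?thesis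
    using X mult_closed by (auto simp: to_semidirect_even_odd sdp_mult_def)
qed

lemma even_simple_alg: "simple_alg sc Ev m"
proof -
  obtain one where "one \<in> Ev" "one \<noteq> 0" "\<And>y. m one y = y \<and> m y one = y"
    using exists_unit by blast
  then have "m one one \<noteq> 0"
    by simp
  moreover have "bilinear_on sc Ev m"
    using bilinear unfolding bilinear_on_def by blast
  ultimately show ?thesis
    unfolding simple_alg_def assoc_alg_on_def
    using subspace_C mult_closed mult_assoc even_simple \<open>one \<in> Ev\<close> by blast
qed

lemma semidirect_iso: "sdp_superalg_iso sc m Ev Od Ev m to_semidirect"
  unfolding sdp_superalg_iso_def bij_betw_def
  using inj_to_semidirect range_to_semidirect to_semidirect_add to_semidirect_scale to_semidirect_mult
    to_semidirect_even to_semidirect_odd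
  by blast

end

lemma fin_dim_vs_imp_finite_dimensional:
  fixes sc :: "'k::field \<Rightarrow> 'a::ab_group_add \<Rightarrow> 'a"
  assumes "fin_dim_vs sc"
  obtains Bas where "finite_dimensional_vector_space sc Bas"
proof -
  interpret vector_space sc
    using assms unfolding fin_dim_vs_def by blast
  obtain G where G: "finite G" "span G = UNIV"
    using assms unfolding fin_dim_vs_def by blast
  obtain Bas where Bas: "Bas \<subseteq> G" "independent Bas" "G \<subseteq> span Bas"
    by (rule maximal_independent_subset)
  have "span Bas = UNIV"
    using G(2) span_mono[OF Bas(3)] by (auto simp: span_span)
  moreover have "finite Bas"
    using Bas(1) G(1) by (rule finite_subset)
  ultimately show thesis
    using Bas(2) by (intro that) unfold_locales
qed

lemma semisimple_alg_square_zero_ideal: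
  assumes "semisimple_alg sc C m" "alg_ideal sc C m J" "\<And>x y. x \<in> J \<Longrightarrow> y \<in> J \<Longrightarrow> m x y = 0"
  shows "J = {0}"
proof -
  have "prods m J 1 \<subseteq> {0}"
    using assms(3) by auto
  then show ?thesis
    using assms(1,2) unfolding semisimple_alg_def nilpotent_set_def by blast
qed

lemma irreducible_nonsimple_superalgebraI:
  fixes sc :: "'k::field \<Rightarrow> 'a::ab_group_add \<Rightarrow> 'a"
  assumes "assoc_superalg sc m A0 A1" "odd_symmetric sc m A0 A1 B" "B_irreducible sc m A0 A1 B"
    "\<not> simple_superalg sc m A0 A1" "semisimple_alg sc A0 m"
  obtains Bas where "irreducible_nonsimple_superalgebra sc Bas m A0 A1 B"
proof -
  obtain Bas where "finite_dimensional_vector_space sc Bas"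
    using assms(1) fin_dim_vs_imp_finite_dimensional unfolding assoc_superalg_def by blast
  then have "irreducible_nonsimple_superalgebra sc Bas m A0 A1 B"
    using assms(1,2)[unfolded assoc_superalg_def odd_symmetric_def] assms(3,4)
      semisimple_alg_square_zero_ideal[OF assms(5)]
    unfolding irreducible_nonsimple_superalgebra_def irreducible_nonsimple_superalgebra_axioms_def
      odd_symmetric_superalgebra_def odd_symmetric_superalgebra_axioms_def
      semiprime_algebra_def semiprime_algebra_axioms_def fd_algebra_def fd_algebra_axioms_def
    by (intro conjI allI impI) auto
  then show thesis
    by (rule that)
qed

theorem mainTheorem18:
  fixes sc :: "'k::field_char_0 \<Rightarrow> 'a::ab_group_add \<Rightarrow> 'a"
    and m :: "'a \<Rightarrow> 'a \<Rightarrow> 'a"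
    and A0 A1 :: "'a set"
    and B :: "'a \<Rightarrow> 'a \<Rightarrow> 'k"
  assumes "alg_closed TYPE('k)"
    and "assoc_superalg sc m A0 A1"
    and "odd_symmetric sc m A0 A1 B"
    and "B_irreducible sc m A0 A1 B"
    and "\<not> simple_superalg sc m A0 A1"
    and "semisimple_alg sc A0 m"
  shows "\<exists>S mS \<phi>. simple_alg sc S mS \<and> sdp_superalg_iso sc m A0 A1 S mS \<phi>"
proof -
  obtain Bas where "irreducible_nonsimple_superalgebra sc Bas m A0 A1 B"
    using irreducible_nonsimple_superalgebraI[OF assms(2-6)] .
  then interpret irreducible_nonsimple_superalgebra sc Bas m A0 A1 B .
  show ?thesis
    using even_simple_alg semidirect_iso by blast
qed

end
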